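(* Let $\mu$ be a global maximum point of $f$ and let $\nu_U$ be the law of $U_N(\sigma)=m_N(\sigma)-\mu$ when $\sigma$ has law $\rho_\mu^{\otimes N}$. There exists $\widehat B>0$, depending only on $\rho$ (and $J,h$), such that for every $B\in(0,\widehat B)$, every $a\in(0,B/2)$, every $r\in\mathbb{R}$ and every $\gamma\in\mathbb{R}$ there is $\bar\delta=\bar\delta(a,B)>0$ with, as $N\to\infty$, $$\int_{\mathbb{R}}\exp\Big(irN^\gamma w-\frac{NJ}{2}w^2\Big)\int_{|u|\le a}\exp(NJuw)\,d\nu_U(u)\,dw=\int_{|w|\le B}\exp\Big(irN^\gamma w-\frac{NJ}{2}w^2\Big)\int_{\mathbb{R}}\exp(NJuw)\,d\nu_U(u)\,dw+O(e^{-N\bar\delta}).$$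
   Context: Let $\rho$ be a non-degenerate Borel probability measure on $\mathbb{R}$ such that $\int_{\mathbb{R}}\exp\big(\tfrac{a x^2}{2}+bx\big)\,d\rho(x)<\infty$ for all $a>0$, $b\in\mathbb{R}$. Fix $J>0$ and $h\in\mathbb{R}$. Define $f(x)=-\frac{J}{2}x^2+\ln\int_{\mathbb{R}}\exp\big(s(Jx+h)\big)\,d\rho(s)$. For $x\in\mathbb{R}$ let $\rho_x$ be the probability measure $d\rho_x(s)=\dfrac{\exp(s(Jx+h))\,d\rho(s)}{\int_{\mathbb{R}}\exp(t(Jx+h))\,d\rho(t)}$. For $\sigma\in\mathbb{R}^N$, $m_N(\sigma)=\frac1N\sum_{i=1}^N\sigma_i$. *)

theory Defs
  imports "HOL-Probability.Probability"
begin

definition fCW :: "real measure \<Rightarrow> real \<Rightarrow> real \<Rightarrow> real \<Rightarrow> real" where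
  "fCW \<rho> J h x = - (J / 2) * x\<^sup>2 + ln (\<integral>s. exp (s * (J * x + h)) \<partial>\<rho>)"

definition tilted :: "real measure \<Rightarrow> real \<Rightarrow> real \<Rightarrow> real \<Rightarrow> real measure" where
  "tilted \<rho> J h x =
     density \<rho> (\<lambda>s. ennreal (exp (s * (J * x + h)) / (\<integral>t. exp (t * (J * x + h)) \<partial>\<rho>)))"

definition mN :: "nat \<Rightarrow> (nat \<Rightarrow> real) \<Rightarrow> real" where
  "mN N \<sigma> = (\<Sum>i<N. \<sigma> i) / real N"

definition nuU :: "real measure \<Rightarrow> real \<Rightarrow> real \<Rightarrow> real \<Rightarrow> nat \<Rightarrow> real measure" where
  "nuU \<rho> J h \<mu> N =
     distr (PiM {..<N} (\<lambda>_. tilted \<rho> J h \<mu>)) lborel (\<lambda>\<sigma>. mN N \<sigma> - \<mu>)"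

end

theory Submission
  imports Defs
begin

text \<open>Let M be the moment generating function of x - \<mu> under the tilted law \<rho>_\<mu>. Maximality of
  \<mu> for f, used at \<mu> + s / J, is exactly the sub-Gaussian bound M s \<le> exp (s^2 / (2 J)); as the
  Laplace transform of \<nu>_U at N J w is M (J w)^N, the full inner integral is at most
  exp (N J w^2 / 2), which the Gaussian weight cancels. M is an entire power series that cannot equal
  exp (s^2 / (2 J)), because exp (J (x - \<mu>)^2) is \<rho>_\<mu>-integrable; hence M s < exp (s^2 / (2 J)) for
  0 < |s| < \<epsilon>, with a uniform gap on every compact annulus, and Bhat = \<epsilon> / J works. For |w| \<le> B the
  mass of \<nu>_U outside [-a, a] is then exponentially small against exp (N J w^2 / 2): by a Chernoff
  bound when |w| \<le> a / 2 and by the annulus gap when a / 2 \<le> |w| \<le> B. For |w| > B the truncated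
  integral is at most exp (N J a |w|), which the Gaussian weight beats because a < B / 2.\<close>

lemma integrable_exp_neg_quadratic:
  fixes c :: real assumes c: "c > 0"
  shows "integrable lborel (\<lambda>w. exp (- c * w\<^sup>2))"
proof -
  define \<sigma> where "\<sigma> = 1 / sqrt (2 * c)"
  have \<sigma>2: "\<sigma>\<^sup>2 = 1 / (2 * c)" using c by (simp add: \<sigma>_def power_divide)
  have "sqrt (2 * pi * \<sigma>\<^sup>2) * normal_density 0 \<sigma> w = exp (- c * w\<^sup>2)" for w
    using c \<sigma>2 by (simp add: normal_density_def \<sigma>_def)
  moreover have "integrable lborel (\<lambda>w. sqrt (2 * pi * \<sigma>\<^sup>2) * normal_density 0 \<sigma> w)"
    using c by (intro integrable_mult_right integrable_normal_density) (simp add: \<sigma>_def)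
  ultimately show ?thesis by simp
qed

lemma integrable_exp_neg_quadratic_abs:
  fixes c b :: real assumes c: "c > 0"
  shows "integrable lborel (\<lambda>w. exp (- c * w\<^sup>2 + b * \<bar>w\<bar>))"
proof (rule Bochner_Integration.integrable_bound)
  show "integrable lborel (\<lambda>w. exp (b\<^sup>2 / (2 * c)) * exp (- (c / 2) * w\<^sup>2))"
    using integrable_exp_neg_quadratic[of "c / 2"] c by simp
  have "- c * w\<^sup>2 + b * \<bar>w\<bar> \<le> b\<^sup>2 / (2 * c) + - (c / 2) * w\<^sup>2" for w
  proof -
    have "0 \<le> (c * \<bar>w\<bar> - b)\<^sup>2 / (2 * c)" using c by simp
    thus ?thesis using c by (simp add: field_simps power2_eq_square)
  qed
  thus "AE w in lborel. norm (exp (- c * w\<^sup>2 + b * \<bar>w\<bar>))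
          \<le> norm (exp (b\<^sup>2 / (2 * c)) * exp (- (c / 2) * w\<^sup>2))"
    by (intro AE_I2) (simp add: exp_add[symmetric])
qed simp

lemma exp_series_partial_sum_le:
  fixes y :: real and K :: "nat set" assumes "finite K"
  shows "(\<Sum>n\<in>K. \<bar>y\<bar> ^ n /\<^sub>R fact n) \<le> exp y + exp (- y)"
proof -
  have "(\<Sum>n\<in>K. \<bar>y\<bar> ^ n /\<^sub>R fact n) \<le> (\<Sum>n. \<bar>y\<bar> ^ n /\<^sub>R fact n)"
    by (rule sum_le_suminf[OF summable_exp_generic assms]) auto
  also have "\<dots> = exp \<bar>y\<bar>" using exp_converges[of "\<bar>y\<bar>"] by (simp add: sums_iff)
  also have "\<dots> \<le> exp y + exp (- y)" by (cases "y \<ge> 0") auto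
  finally show ?thesis .
qed

lemma abs_power_div_fact_le_exp:
  fixes y :: real shows "\<bar>y\<bar> ^ k /\<^sub>R fact k \<le> exp y + exp (- y)"
  using exp_series_partial_sum_le[of "{k}" y] by simp

lemma power_series_nonzero_near_0:
  fixes c :: "nat \<Rightarrow> real"
  assumes sums: "\<And>s. (\<lambda>k. c k * s ^ k) sums F s" and nonzero: "\<exists>k. c k \<noteq> 0"
  shows "\<exists>\<epsilon>>0. \<forall>s. 0 < \<bar>s\<bar> \<and> \<bar>s\<bar> < \<epsilon> \<longrightarrow> F s \<noteq> 0"
proof -
  define k where "k = (LEAST k. c k \<noteq> 0)"
  have ck: "c k \<noteq> 0" unfolding k_def by (rule LeastI_ex[OF nonzero])
  have below_k: "c j = 0" if "j < k" for j
    using not_less_Least[of j "\<lambda>k. c k \<noteq> 0"] that unfolding k_def by blast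
  define H where "H s = (\<Sum>n. c (n + k) * s ^ n)" for s
  have shifted: "(\<lambda>n. c (n + k) * s ^ n) sums (F s / s ^ k)" if "s \<noteq> 0" for s
  proof -
    have "(\<lambda>n. c (n + k) * s ^ (n + k)) sums (F s - (\<Sum>i<k. c i * s ^ i))"
      using sums_split_initial_segment[OF sums[of s], of k] by simp
    hence "(\<lambda>n. c (n + k) * s ^ (n + k) / s ^ k) sums (F s / s ^ k)"
      using below_k by (intro sums_divide) simp
    thus ?thesis using that by (simp add: power_add)
  qed
  have "summable (\<lambda>n. c (n + k) * s ^ n)" for s
    using shifted[of s] by (cases "s = 0") (auto simp: sums_iff)
  hence "isCont H 0" unfolding H_def by (rule isCont_powser_converges_everywhere)
  moreover have "H 0 = c k" unfolding H_def using powser_zero[of "\<lambda>n. c (n + k)"] by simp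
  ultimately have "H \<midarrow>0\<rightarrow> c k" by (simp add: isCont_def)
  from LIM_fun_not_zero[OF this ck] obtain \<epsilon> where \<epsilon>: "0 < \<epsilon>"
    "\<forall>s. s \<noteq> 0 \<and> \<bar>0 - s\<bar> < \<epsilon> \<longrightarrow> H s \<noteq> 0" by blast
  have "F s \<noteq> 0" if "0 < \<bar>s\<bar> \<and> \<bar>s\<bar> < \<epsilon>" for s
  proof -
    have "H s = F s / s ^ k" using shifted[of s] that unfolding H_def by (auto simp: sums_iff)
    thus ?thesis using \<epsilon>(2) that by auto
  qed
  thus ?thesis using \<epsilon>(1) by blast
qed

text \<open>Chernoff's trick: beyond [-a, a] one of the tilts by \<plusminus>t gains the factor exp (n t a).\<close>
lemma exp_le_two_sided_tilt:
  fixes n t a s u :: real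
  assumes "0 \<le> n" "0 \<le> t" "a < \<bar>u\<bar>"
  shows "exp (n * s * u) \<le> exp (- (n * t * a)) * (exp (n * (s + t) * u) + exp (n * (s - t) * u))"
proof -
  have "n * s * u \<le> - (n * t * a) + n * (s + t) * u \<or> n * s * u \<le> - (n * t * a) + n * (s - t) * u"
  proof (cases "u \<ge> 0")
    case True
    hence "0 \<le> n * t * (u - a)" using assms by (intro mult_nonneg_nonneg) auto
    thus ?thesis by (simp add: algebra_simps)
  next
    case False
    hence "0 \<le> n * t * (- u - a)" using assms by (intro mult_nonneg_nonneg) auto
    thus ?thesis by (simp add: algebra_simps)
  qed
  hence "exp (n * s * u) \<le> exp (- (n * t * a)) * exp (n * (s + t) * u)
      \<or> exp (n * s * u) \<le> exp (- (n * t * a)) * exp (n * (s - t) * u)"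
    by (simp only: exp_add[symmetric] exp_le_cancel_iff)
  moreover have "0 \<le> exp (- (n * t * a)) * exp (n * (s + t) * u)"
    "0 \<le> exp (- (n * t * a)) * exp (n * (s - t) * u)" by simp_all
  ultimately show ?thesis unfolding distrib_left by linarith
qed

lemma exp_two_rates_le_min_rate:
  fixes n x y K c :: real
  assumes "0 \<le> n" "0 \<le> K" "0 \<le> c"
  shows "exp (- (n - 1) * x) * K + c * exp (- n * y) \<le> (K * exp x + c) * exp (- n * min x y)"
proof -
  have "exp (- (n - 1) * x) = exp x * exp (- n * x)" by (simp add: exp_add[symmetric] algebra_simps)
  also have "\<dots> \<le> exp x * exp (- n * min x y)" using assms(1) by (simp add: mult_left_mono)
  finally have "exp (- (n - 1) * x) * K \<le> exp x * exp (- n * min x y) * K"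
    using assms(2) by (rule mult_right_mono)
  moreover have "c * exp (- n * y) \<le> c * exp (- n * min x y)"
    using assms by (intro mult_left_mono) (simp_all add: mult_left_mono)
  ultimately show ?thesis by (simp add: algebra_simps)
qed

subsection \<open>The tilted measure and its moment generating function\<close>

locale curie_weiss_maximum =
  fixes \<rho> :: "real measure" and J h \<mu> :: real
  assumes sets_rho: "sets \<rho> = sets borel"
    and prob_space_rho: "prob_space \<rho>"
    and integrable_rho_exp_quadratic: "\<forall>a>0. \<forall>b. integrable \<rho> (\<lambda>x. exp (a * x\<^sup>2 / 2 + b * x))"
    and J_pos: "J > 0"
    and mu_max: "\<forall>x. fCW \<rho> J h x \<le> fCW \<rho> J h \<mu>"
begin

interpretation R: prob_space \<rho> by (rule prob_space_rho)

lemma space_rho: "space \<rho> = UNIV"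
  using sets_eq_imp_space_eq[OF sets_rho] by simp

lemma borel_measurable_rho: "f \<in> borel_measurable borel \<Longrightarrow> f \<in> borel_measurable \<rho>"
  by (simp add: measurable_cong_sets[OF sets_rho refl])

lemma integrable_rho_exp_linear: "integrable \<rho> (\<lambda>x. exp (x * t))"
proof (rule Bochner_Integration.integrable_bound)
  show "integrable \<rho> (\<lambda>x. exp (1 * x\<^sup>2 / 2 + t * x))"
    using integrable_rho_exp_quadratic[rule_format, of 1 t] by simp
  show "(\<lambda>x. exp (x * t)) \<in> borel_measurable \<rho>" by (rule borel_measurable_rho) simp
qed (simp add: mult.commute)

definition Z :: "real \<Rightarrow> real" where "Z t = (\<integral>s. exp (s * t) \<partial>\<rho>)"

lemma Z_pos: "Z t > 0"
proof -
  have "(\<integral>s. 0 \<partial>\<rho>) < (\<integral>s. exp (s * t) \<partial>\<rho>)"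
    by (rule R.integral_less_AE_space)
       (auto intro: integrable_rho_exp_linear simp: R.emeasure_space_1)
  thus ?thesis by (simp add: Z_def)
qed

definition \<theta> :: real where "\<theta> = J * \<mu> + h"

definition tilt_density :: "real \<Rightarrow> real" where "tilt_density x = exp (x * \<theta>) / Z \<theta>"

definition P :: "real measure" where "P = tilted \<rho> J h \<mu>"

lemma P_eq_density: "P = density \<rho> (\<lambda>x. ennreal (tilt_density x))"
  unfolding P_def tilted_def tilt_density_def Z_def \<theta>_def ..

lemma tilt_density_nonneg: "0 \<le> tilt_density x"
  using Z_pos[of \<theta>] by (simp add: tilt_density_def)

lemma borel_measurable_tilt_density[measurable]: "tilt_density \<in> borel_measurable \<rho>"
  unfolding tilt_density_def by (rule borel_measurable_rho) simp

lemma sets_P: "sets P = sets borel"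
  by (simp add: P_eq_density sets_rho)

lemma borel_measurable_P: "f \<in> borel_measurable borel \<Longrightarrow> f \<in> borel_measurable P"
  by (simp add: measurable_cong_sets[OF sets_P refl])

lemma integrable_P_iff:
  "g \<in> borel_measurable borel \<Longrightarrow> integrable P g \<longleftrightarrow> integrable \<rho> (\<lambda>x. tilt_density x * g x)"
  unfolding P_eq_density
  by (subst integrable_density) (auto intro: borel_measurable_rho simp: tilt_density_nonneg)

lemma integral_P:
  "g \<in> borel_measurable borel \<Longrightarrow> (\<integral>x. g x \<partial>P) = (\<integral>x. tilt_density x * g x \<partial>\<rho>)"
  unfolding P_eq_density
  by (subst integral_density) (auto intro: borel_measurable_rho simp: tilt_density_nonneg)

lemma prob_space_P: "prob_space P"
proof
  have "emeasure P (space P) = (\<integral>\<^sup>+x. ennreal (tilt_density x) \<partial>\<rho>)"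
    unfolding P_eq_density
    by (subst emeasure_density) (auto simp: space_rho intro: sets.top[of \<rho>, unfolded space_rho])
  also have "\<dots> = ennreal (\<integral>x. tilt_density x \<partial>\<rho>)"
    unfolding tilt_density_def
    by (intro nn_integral_eq_integral integrable_divide integrable_rho_exp_linear)
       (simp add: tilt_density_nonneg[unfolded tilt_density_def])
  also have "(\<integral>x. tilt_density x \<partial>\<rho>) = 1"
    using Z_pos[of \<theta>] unfolding tilt_density_def by (simp add: Z_def)
  finally show "emeasure P (space P) = 1" by simp
qed

interpretation P: prob_space P by (rule prob_space_P)

definition mgf :: "real \<Rightarrow> real" where "mgf s = (\<integral>x. exp (s * (x - \<mu>)) \<partial>P)"

lemma tilt_density_times_exp:
  "tilt_density x * exp (s * (x - \<mu>)) = (exp (- s * \<mu>) / Z \<theta>) * exp (x * (\<theta> + s))"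
  by (simp add: tilt_density_def field_simps exp_add[symmetric] exp_diff)

lemma integrable_mgf: "integrable P (\<lambda>x. exp (s * (x - \<mu>)))"
  by (subst integrable_P_iff) (simp_all add: tilt_density_times_exp integrable_rho_exp_linear)

lemma mgf_eq: "mgf s = exp (- s * \<mu>) * Z (\<theta> + s) / Z \<theta>"
  unfolding mgf_def by (subst integral_P) (simp_all add: tilt_density_times_exp Z_def)

lemma mgf_pos: "mgf s > 0"
  using Z_pos by (simp add: mgf_eq)

lemma mgf_le_gaussian: "mgf s \<le> exp (s\<^sup>2 / (2 * J))"
proof -
  have "fCW \<rho> J h (\<mu> + s / J) \<le> fCW \<rho> J h \<mu>" using mu_max by blast
  moreover have "J * (\<mu> + s / J) + h = \<theta> + s" using J_pos by (simp add: \<theta>_def field_simps)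
  ultimately have "- (J / 2) * (\<mu> + s / J)\<^sup>2 + ln (Z (\<theta> + s)) \<le> - (J / 2) * \<mu>\<^sup>2 + ln (Z \<theta>)"
    unfolding fCW_def Z_def \<theta>_def by simp
  moreover have "(J / 2) * (\<mu> + s / J)\<^sup>2 = (J / 2) * \<mu>\<^sup>2 + s * \<mu> + s\<^sup>2 / (2 * J)"
    using J_pos by (simp add: power2_eq_square field_simps)
  ultimately have "ln (Z (\<theta> + s)) \<le> ln (Z \<theta>) + s * \<mu> + s\<^sup>2 / (2 * J)"
    by linarith
  hence "Z (\<theta> + s) \<le> exp (ln (Z \<theta>) + s * \<mu> + s\<^sup>2 / (2 * J))"
    using Z_pos by (metis exp_le_cancel_iff exp_ln)
  hence "Z (\<theta> + s) \<le> Z \<theta> * exp (s * \<mu>) * exp (s\<^sup>2 / (2 * J))"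
    using Z_pos by (simp add: exp_add)
  thus ?thesis
    using Z_pos[of \<theta>] by (simp add: mgf_eq divide_le_eq exp_minus field_simps)
qed

subsection \<open>Strict sub-Gaussianity near the origin\<close>

definition centered_moment :: "nat \<Rightarrow> real" where
  "centered_moment k = (\<integral>x. (x - \<mu>) ^ k \<partial>P)"

lemma integrable_exp_sum_two_sides: "integrable P (\<lambda>x. exp (s * (x - \<mu>)) + exp (- (s * (x - \<mu>))))"
  using integrable_mgf[of s] integrable_mgf[of "- s"] by (intro Bochner_Integration.integrable_add) auto

lemma norm_exp_series_term: "norm ((s * (x - \<mu>)) ^ k /\<^sub>R fact k) = \<bar>s * (x - \<mu>)\<bar> ^ k /\<^sub>R fact k"
  by (simp add: power_abs abs_mult)

lemma integrable_exp_series_term: "integrable P (\<lambda>x. (s * (x - \<mu>)) ^ k /\<^sub>R fact k)"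
proof (rule Bochner_Integration.integrable_bound[OF integrable_exp_sum_two_sides[of s]])
  show "(\<lambda>x. (s * (x - \<mu>)) ^ k /\<^sub>R fact k) \<in> borel_measurable P"
    by (rule borel_measurable_P) simp
  have "norm ((s * (x - \<mu>)) ^ k /\<^sub>R fact k) \<le> norm (exp (s * (x - \<mu>)) + exp (- (s * (x - \<mu>))))"
    for x
  proof -
    have "norm ((s * (x - \<mu>)) ^ k /\<^sub>R fact k) \<le> exp (s * (x - \<mu>)) + exp (- (s * (x - \<mu>)))"
      unfolding norm_exp_series_term by (rule abs_power_div_fact_le_exp)
    also have "\<dots> \<le> norm (exp (s * (x - \<mu>)) + exp (- (s * (x - \<mu>))))" by simp
    finally show ?thesis .
  qed
  thus "AE x in P. norm ((s * (x - \<mu>)) ^ k /\<^sub>R fact k)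
          \<le> norm (exp (s * (x - \<mu>)) + exp (- (s * (x - \<mu>))))"
    by (rule AE_I2)
qed

lemma mgf_sums: "(\<lambda>k. (centered_moment k / fact k) * s ^ k) sums mgf s"
proof -
  let ?f = "\<lambda>k x. (s * (x - \<mu>)) ^ k /\<^sub>R fact k"
  have "summable (\<lambda>k. \<integral>x. norm (?f k x) \<partial>P)"
  proof (rule summableI_nonneg_bounded)
    fix n
    have "(\<Sum>k<n. \<integral>x. norm (?f k x) \<partial>P) = (\<integral>x. (\<Sum>k<n. norm (?f k x)) \<partial>P)"
      by (intro Bochner_Integration.integral_sum[symmetric] integrable_norm integrable_exp_series_term)
    also have "\<dots> \<le> (\<integral>x. exp (s * (x - \<mu>)) + exp (- (s * (x - \<mu>))) \<partial>P)"
      by (intro integral_mono integrable_exp_sum_two_sides Bochner_Integration.integrable_sum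
                integrable_norm integrable_exp_series_term)
         (simp only: norm_exp_series_term exp_series_partial_sum_le finite_lessThan)
    finally show "(\<Sum>k<n. \<integral>x. norm (?f k x) \<partial>P)
                    \<le> (\<integral>x. exp (s * (x - \<mu>)) + exp (- (s * (x - \<mu>))) \<partial>P)" .
  qed simp
  hence "(\<lambda>k. integral\<^sup>L P (?f k)) sums (\<integral>x. (\<Sum>k. ?f k x) \<partial>P)"
    by (intro sums_integral integrable_exp_series_term AE_I2)
       (simp_all only: norm_exp_series_term summable_exp_generic)
  moreover have "(\<Sum>k. ?f k x) = exp (s * (x - \<mu>))" for x
    using exp_converges[of "s * (x - \<mu>)"] by (simp add: sums_iff)
  moreover have "integral\<^sup>L P (?f k) = (centered_moment k / fact k) * s ^ k" for k
    by (simp add: centered_moment_def power_mult_distrib divide_inverse mult_ac)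
  ultimately show ?thesis by (simp add: mgf_def)
qed

lemma isCont_mgf: "isCont mgf s"
proof -
  have "mgf = (\<lambda>s. \<Sum>k. (centered_moment k / fact k) * s ^ k)"
    using mgf_sums by (auto simp: sums_iff)
  moreover have "isCont (\<lambda>s. \<Sum>k. (centered_moment k / fact k) * s ^ k) s"
    by (rule isCont_powser_converges_everywhere) (use mgf_sums sums_summable in blast)
  ultimately show ?thesis by simp
qed

definition gaussian_mgf_coeff :: "nat \<Rightarrow> real" where
  "gaussian_mgf_coeff k = (if even k then (1 / (2 * J)) ^ (k div 2) / fact (k div 2) else 0)"

lemma gaussian_mgf_sums: "(\<lambda>k. gaussian_mgf_coeff k * s ^ k) sums exp (s\<^sup>2 / (2 * J))"
proof -
  have "(\<lambda>n. gaussian_mgf_coeff (2 * n) * s ^ (2 * n)) = (\<lambda>n. (s\<^sup>2 / (2 * J)) ^ n /\<^sub>R fact n)"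
  proof
    fix n
    have "s ^ (2 * n) = (s\<^sup>2) ^ n" by (simp add: power_mult)
    thus "gaussian_mgf_coeff (2 * n) * s ^ (2 * n) = (s\<^sup>2 / (2 * J)) ^ n /\<^sub>R fact n"
      by (simp add: gaussian_mgf_coeff_def power_divide field_simps)
  qed
  hence "(\<lambda>n. gaussian_mgf_coeff (2 * n) * s ^ (2 * n)) sums exp (s\<^sup>2 / (2 * J))"
    by (simp only: exp_converges)
  moreover have "strict_mono (\<lambda>n::nat. 2 * n)" by (simp add: strict_mono_def)
  moreover have "gaussian_mgf_coeff k * s ^ k = 0" if "k \<notin> range (\<lambda>n::nat. 2 * n)" for k
  proof -
    have "odd k" using that by (auto elim!: evenE)
    thus ?thesis by (simp add: gaussian_mgf_coeff_def)
  qed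
  ultimately show ?thesis
    using sums_mono_reindex[of "\<lambda>n. 2 * n" "\<lambda>k. gaussian_mgf_coeff k * s ^ k"] by simp
qed

lemma integrable_exp_J_square: "integrable P (\<lambda>x. exp (J * (x - \<mu>)\<^sup>2))"
proof (subst integrable_P_iff)
  have "tilt_density x * exp (J * (x - \<mu>)\<^sup>2)
          = (exp (J * \<mu>\<^sup>2) / Z \<theta>) * exp (J * x\<^sup>2 + (\<theta> - 2 * J * \<mu>) * x)" for x
    by (simp add: tilt_density_def exp_add[symmetric] power2_eq_square field_simps)
  moreover have "integrable \<rho> (\<lambda>x. (exp (J * \<mu>\<^sup>2) / Z \<theta>) * exp (J * x\<^sup>2 + (\<theta> - 2 * J * \<mu>) * x))"
    using integrable_rho_exp_quadratic[rule_format, of "2 * J" "\<theta> - 2 * J * \<mu>"] J_pos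
    by (intro integrable_mult_right) simp
  ultimately show "integrable \<rho> (\<lambda>x. tilt_density x * exp (J * (x - \<mu>)\<^sup>2))" by simp
qed simp

text \<open>Since exp (J (x - \<mu>)^2) is integrable under P, Young's inequality gives
  mgf s \<le> exp (s^2 / (4 J)) E, which the Gaussian exp (s^2 / (2 J)) outgrows.\<close>
lemma mgf_neq_gaussian: "\<exists>s. mgf s \<noteq> exp (s\<^sup>2 / (2 * J))"
proof (rule ccontr)
  assume "\<nexists>s. mgf s \<noteq> exp (s\<^sup>2 / (2 * J))"
  hence eq: "mgf s = exp (s\<^sup>2 / (2 * J))" for s by blast
  define E where "E = (\<integral>x. exp (J * (x - \<mu>)\<^sup>2) \<partial>P)"
  have le: "mgf s \<le> exp (s\<^sup>2 / (4 * J)) * E" for s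
  proof -
    have "s * (x - \<mu>) \<le> s\<^sup>2 / (4 * J) + J * (x - \<mu>)\<^sup>2" for x
    proof -
      have "0 \<le> (2 * J * (x - \<mu>) - s)\<^sup>2 / (4 * J)" using J_pos by simp
      also have "\<dots> = J * (x - \<mu>)\<^sup>2 - s * (x - \<mu>) + s\<^sup>2 / (4 * J)"
        using J_pos by (simp add: power2_eq_square field_simps)
      finally show ?thesis by linarith
    qed
    hence "mgf s \<le> (\<integral>x. exp (s\<^sup>2 / (4 * J)) * exp (J * (x - \<mu>)\<^sup>2) \<partial>P)"
      unfolding mgf_def
      by (intro integral_mono integrable_mgf integrable_mult_right integrable_exp_J_square)
         (simp add: exp_add[symmetric])
    thus ?thesis by (simp add: E_def)
  qed
  define s where "s = sqrt (4 * J * \<bar>E\<bar>)"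
  have s: "s\<^sup>2 / (4 * J) = \<bar>E\<bar>" "s\<^sup>2 / (2 * J) = \<bar>E\<bar> + \<bar>E\<bar>"
    using J_pos by (simp_all add: s_def)
  have "exp \<bar>E\<bar> * exp \<bar>E\<bar> = mgf s" using eq[of s] s by (simp only: exp_add)
  also have "\<dots> \<le> exp \<bar>E\<bar> * E" using le[of s] s by (simp only:)
  finally have "exp \<bar>E\<bar> \<le> E" by simp
  moreover have "1 + \<bar>E\<bar> \<le> exp \<bar>E\<bar>" by (rule exp_ge_add_one_self)
  ultimately show False by linarith
qed

lemma mgf_less_gaussian_near_0:
  "\<exists>\<epsilon>>0. \<forall>s. 0 < \<bar>s\<bar> \<and> \<bar>s\<bar> < \<epsilon> \<longrightarrow> mgf s < exp (s\<^sup>2 / (2 * J))"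
proof -
  define c where "c k = centered_moment k / fact k - gaussian_mgf_coeff k" for k
  have sums: "(\<lambda>k. c k * s ^ k) sums (mgf s - exp (s\<^sup>2 / (2 * J)))" for s
    unfolding c_def left_diff_distrib by (intro sums_diff mgf_sums gaussian_mgf_sums)
  have "\<exists>k. c k \<noteq> 0"
  proof (rule ccontr)
    assume "\<nexists>k. c k \<noteq> 0"
    hence "(\<lambda>k. 0) sums (mgf s - exp (s\<^sup>2 / (2 * J)))" for s using sums[of s] by simp
    hence "0 = mgf s - exp (s\<^sup>2 / (2 * J))" for s by (rule sums_unique2[OF sums_zero])
    thus False using mgf_neq_gaussian by simp
  qed
  from power_series_nonzero_near_0[OF sums this] obtain \<epsilon> where "\<epsilon> > 0"
    "\<forall>s. 0 < \<bar>s\<bar> \<and> \<bar>s\<bar> < \<epsilon> \<longrightarrow> mgf s \<noteq> exp (s\<^sup>2 / (2 * J))" by auto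
  moreover have "mgf s < exp (s\<^sup>2 / (2 * J))" if "mgf s \<noteq> exp (s\<^sup>2 / (2 * J))" for s
    using that mgf_le_gaussian[of s] by simp
  ultimately show ?thesis by blast
qed

lemma mgf_uniform_gap:
  "\<exists>\<epsilon>>0. \<forall>c b. 0 < c \<and> c \<le> b \<and> b < \<epsilon> \<longrightarrow>
     (\<exists>\<delta>>0. \<forall>s. c \<le> \<bar>s\<bar> \<and> \<bar>s\<bar> \<le> b \<longrightarrow> mgf s \<le> exp (- \<delta>) * exp (s\<^sup>2 / (2 * J)))"
proof -
  obtain \<epsilon> where \<epsilon>: "\<epsilon> > 0" "\<forall>s. 0 < \<bar>s\<bar> \<and> \<bar>s\<bar> < \<epsilon> \<longrightarrow> mgf s < exp (s\<^sup>2 / (2 * J))"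
    using mgf_less_gaussian_near_0 by blast
  have "\<exists>\<delta>>0. \<forall>s. c \<le> \<bar>s\<bar> \<and> \<bar>s\<bar> \<le> b \<longrightarrow> mgf s \<le> exp (- \<delta>) * exp (s\<^sup>2 / (2 * J))"
    if cb: "0 < c" "c \<le> b" "b < \<epsilon>" for c b
  proof -
    define S where "S = {-b..-c} \<union> {c..b}"
    define q where "q s = mgf s / exp (s\<^sup>2 / (2 * J))" for s
    have S_iff: "s \<in> S \<longleftrightarrow> c \<le> \<bar>s\<bar> \<and> \<bar>s\<bar> \<le> b" for s using cb unfolding S_def by auto
    have "compact S" "S \<noteq> {}" using cb S_iff[of b] by (auto simp: S_def)
    moreover have "continuous_on S q"
      unfolding q_def using J_pos
      by (intro continuous_at_imp_continuous_on ballI isCont_divide isCont_mgf) (auto intro!: continuous_intros)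
    ultimately obtain s0 where s0: "s0 \<in> S" "\<forall>s\<in>S. q s \<le> q s0"
      using continuous_attains_sup[of S q] by blast
    have "0 < \<bar>s0\<bar> \<and> \<bar>s0\<bar> < \<epsilon>" using s0(1) cb unfolding S_iff by linarith
    hence q1: "q s0 < 1" and q0: "q s0 > 0" using \<epsilon>(2) mgf_pos[of s0] by (simp_all add: q_def)
    show ?thesis
    proof (intro exI[of _ "- ln (q s0)"] conjI allI impI)
      show "- ln (q s0) > 0" using q0 q1 by simp
      fix s assume "c \<le> \<bar>s\<bar> \<and> \<bar>s\<bar> \<le> b"
      hence "q s \<le> q s0" using s0(2) S_iff[of s] by simp
      thus "mgf s \<le> exp (- (- ln (q s0))) * exp (s\<^sup>2 / (2 * J))"
        using q0 by (simp add: q_def divide_le_eq)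
    qed
  qed
  thus ?thesis using \<epsilon>(1) by blast
qed

subsection \<open>The law of the centred magnetisation\<close>

abbreviation nu :: "nat \<Rightarrow> real measure" where "nu N \<equiv> nuU \<rho> J h \<mu> N"

lemma nu_eq_distr: "nu N = distr (PiM {..<N} (\<lambda>_. P)) lborel (\<lambda>\<sigma>. mN N \<sigma> - \<mu>)"
  unfolding nuU_def P_def ..

lemma borel_measurable_centered_mN:
  "(\<lambda>\<sigma>. mN N \<sigma> - \<mu>) \<in> PiM {..<N} (\<lambda>_. P) \<rightarrow>\<^sub>M lborel"
proof -
  have "(\<lambda>\<sigma>. \<sigma> i) \<in> borel_measurable (PiM {..<N} (\<lambda>_. P))" if "i < N" for i
    using measurable_component_singleton[of i "{..<N}" "\<lambda>_. P"] that
    by (simp add: measurable_cong_sets[OF refl sets_P])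
  hence "(\<lambda>\<sigma>. (\<Sum>i<N. \<sigma> i) / real N - \<mu>) \<in> borel_measurable (PiM {..<N} (\<lambda>_. P))"
    by (intro borel_measurable_diff borel_measurable_divide borel_measurable_sum) auto
  thus ?thesis unfolding mN_def by simp
qed

lemma prob_space_nu: "prob_space (nu N)"
  unfolding nu_eq_distr
  by (intro prob_space.prob_space_distr prob_space_PiM prob_space_P borel_measurable_centered_mN)

lemma sets_nu: "sets (nu N) = sets borel"
  unfolding nu_eq_distr by simp

lemma nu_exp_moment:
  shows "integrable (nu N) (\<lambda>u. exp (real N * s * u))"
    and "(\<integral>u. exp (real N * s * u) \<partial>nu N) = mgf s ^ N"
proof -
  have sf: "product_sigma_finite (\<lambda>_::nat. P)"
    unfolding product_sigma_finite_def by (simp add: P.sigma_finite_measure_axioms)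
  have "real N * s * (mN N \<sigma> - \<mu>) = (\<Sum>i<N. s * (\<sigma> i - \<mu>))" for \<sigma>
    by (cases "N = 0") (simp_all add: mN_def sum_distrib_left sum_subtractf field_simps)
  hence eq: "exp (real N * s * (mN N \<sigma> - \<mu>)) = (\<Prod>i\<in>{..<N}. exp (s * (\<sigma> i - \<mu>)))" for \<sigma>
    by (simp add: exp_sum)
  have "integrable (PiM {..<N} (\<lambda>_. P)) (\<lambda>\<sigma>. \<Prod>i\<in>{..<N}. exp (s * (\<sigma> i - \<mu>)))"
    by (rule product_sigma_finite.product_integrable_prod[OF sf]) (auto intro: integrable_mgf)
  thus "integrable (nu N) (\<lambda>u. exp (real N * s * u))"
    unfolding nu_eq_distr
    by (subst integrable_distr_eq[OF borel_measurable_centered_mN]) (auto simp: eq)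
  have "(\<integral>u. exp (real N * s * u) \<partial>nu N)
          = (\<integral>\<sigma>. (\<Prod>i\<in>{..<N}. exp (s * (\<sigma> i - \<mu>))) \<partial>PiM {..<N} (\<lambda>_. P))"
    unfolding nu_eq_distr eq[symmetric] by (rule integral_distr[OF borel_measurable_centered_mN]) simp
  also have "\<dots> = (\<Prod>i\<in>{..<N}. mgf s)"
    unfolding mgf_def
    by (rule product_sigma_finite.product_integral_prod[OF sf]) (auto intro: integrable_mgf)
  finally show "(\<integral>u. exp (real N * s * u) \<partial>nu N) = mgf s ^ N" by simp
qed

lemma nu_exp_moment_le: "(\<integral>u. exp (real N * s * u) \<partial>nu N) \<le> exp (real N * (s\<^sup>2 / (2 * J)))"
proof -
  have "mgf s ^ N \<le> exp (s\<^sup>2 / (2 * J)) ^ N"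
    by (intro power_mono mgf_le_gaussian) (simp add: mgf_pos less_imp_le)
  also have "\<dots> = exp (real N * (s\<^sup>2 / (2 * J)))" by (simp only: exp_of_nat_mult)
  finally show ?thesis by (simp only: nu_exp_moment(2))
qed

definition laplace_nu :: "nat \<Rightarrow> real \<Rightarrow> real" where
  "laplace_nu N w = (\<integral>u. exp (real N * J * u * w) \<partial>nu N)"

definition trunc_laplace_nu :: "real \<Rightarrow> nat \<Rightarrow> real \<Rightarrow> real" where
  "trunc_laplace_nu a N w = (\<integral>u. indicator {-a..a} u * exp (real N * J * u * w) \<partial>nu N)"

lemma exp_NJuw_eq: "exp (real N * J * u * w) = exp (real N * (J * w) * u)"
  by (simp add: mult_ac)

lemma integrable_nu_exp: "integrable (nu N) (\<lambda>u. exp (real N * J * u * w))"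
  unfolding exp_NJuw_eq by (rule nu_exp_moment(1))

lemma integrable_nu_trunc_exp: "integrable (nu N) (\<lambda>u. indicator {-a..a} u * exp (real N * J * u * w))"
  using integrable_mult_indicator[of "{-a..a}" "nu N", OF _ integrable_nu_exp] by (simp add: sets_nu)

lemma laplace_nu_eq: "laplace_nu N w = mgf (J * w) ^ N"
  unfolding laplace_nu_def exp_NJuw_eq by (rule nu_exp_moment(2))

lemma laplace_nu_le: "laplace_nu N w \<le> exp (real N * (J * w\<^sup>2 / 2))"
proof -
  have "laplace_nu N w \<le> exp (real N * ((J * w)\<^sup>2 / (2 * J)))"
    unfolding laplace_nu_def exp_NJuw_eq by (rule nu_exp_moment_le)
  also have "(J * w)\<^sup>2 / (2 * J) = J * w\<^sup>2 / 2" using J_pos by (simp add: power2_eq_square)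
  finally show ?thesis .
qed

lemma laplace_nu_nonneg: "0 \<le> laplace_nu N w"
  unfolding laplace_nu_def by (rule integral_nonneg_AE) simp

lemma trunc_laplace_nu_nonneg: "0 \<le> trunc_laplace_nu a N w"
  unfolding trunc_laplace_nu_def by (rule integral_nonneg_AE) auto

lemma trunc_laplace_nu_le: "trunc_laplace_nu a N w \<le> exp (real N * J * a * \<bar>w\<bar>)"
proof -
  interpret prob_space "nu N" by (rule prob_space_nu)
  have "indicator {-a..a} u * exp (real N * J * u * w) \<le> exp (real N * J * a * \<bar>w\<bar>)" for u
  proof (cases "u \<in> {-a..a}")
    case True
    hence "\<bar>u\<bar> \<le> a" by auto
    hence "u * w \<le> a * \<bar>w\<bar>"
      using mult_right_mono[of "\<bar>u\<bar>" a "\<bar>w\<bar>"] abs_mult[of u w] abs_ge_self[of "u * w"] by simp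
    hence "real N * J * (u * w) \<le> real N * J * (a * \<bar>w\<bar>)"
      using J_pos by (intro mult_left_mono) auto
    thus ?thesis using True by (simp add: mult_ac)
  qed simp
  hence "trunc_laplace_nu a N w \<le> (\<integral>u. exp (real N * J * a * \<bar>w\<bar>) \<partial>nu N)"
    unfolding trunc_laplace_nu_def by (intro integral_mono integrable_nu_trunc_exp) simp_all
  thus ?thesis by (simp add: prob_space)
qed

lemma laplace_minus_trunc_eq:
  "laplace_nu N w - trunc_laplace_nu a N w
     = (\<integral>u. (1 - indicator {-a..a} u) * exp (real N * J * u * w) \<partial>nu N)"
  unfolding laplace_nu_def trunc_laplace_nu_def
  using integrable_nu_exp integrable_nu_trunc_exp
  by (subst Bochner_Integration.integral_diff[symmetric]) (auto simp: left_diff_distrib)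

lemma trunc_laplace_nu_le_laplace: "trunc_laplace_nu a N w \<le> laplace_nu N w"
proof -
  have "0 \<le> (\<integral>u. (1 - indicator {-a..a} u) * exp (real N * J * u * w) \<partial>nu N)"
    by (rule integral_nonneg_AE) (auto split: split_indicator)
  thus ?thesis using laplace_minus_trunc_eq[of N w a] by linarith
qed

lemma laplace_minus_trunc_le_chernoff:
  assumes a: "a > 0" and w: "\<bar>w\<bar> \<le> a / 2"
  shows "laplace_nu N w - trunc_laplace_nu a N w \<le> 2 * exp (real N * (J * w\<^sup>2 / 2 - J * a\<^sup>2 / 8))"
proof -
  define t where "t = J * a / 2"
  have t: "t > 0" using J_pos a by (simp add: t_def)
  let ?R = "\<lambda>u. exp (- (real N * t * a))
                * (exp (real N * (J * w + t) * u) + exp (real N * (J * w - t) * u))"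
  have exponent: "(J * w + \<sigma> * t)\<^sup>2 / (2 * J) - t * a \<le> J * w\<^sup>2 / 2 - J * a\<^sup>2 / 8"
    if "\<bar>\<sigma>\<bar> = 1" for \<sigma>
  proof -
    have "\<sigma>\<^sup>2 = 1" using that power2_abs[of \<sigma>] by simp
    hence "(J * w + \<sigma> * t)\<^sup>2 / (2 * J) = J * w\<^sup>2 / 2 + \<sigma> * w * t + t\<^sup>2 / (2 * J)"
      using J_pos by (simp add: power2_eq_square field_simps)
    moreover have "t\<^sup>2 / (2 * J) = J * a\<^sup>2 / 8" "(a / 2) * t = J * a\<^sup>2 / 4" "t * a = J * a\<^sup>2 / 2"
      using J_pos by (simp_all add: t_def power2_eq_square)
    moreover have "\<sigma> * w \<le> a / 2" using that w abs_mult[of \<sigma> w] abs_ge_self[of "\<sigma> * w"] by simp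
    hence "\<sigma> * w * t \<le> (a / 2) * t" using t by (intro mult_right_mono) simp_all
    ultimately show ?thesis by argo
  qed
  have "(1 - indicator {-a..a} u) * exp (real N * J * u * w) \<le> ?R u" for u
  proof (cases "u \<in> {-a..a}")
    case False
    hence "exp (real N * (J * w) * u) \<le> ?R u" using t by (intro exp_le_two_sided_tilt) auto
    thus ?thesis using False by (simp add: exp_NJuw_eq)
  qed simp
  hence "laplace_nu N w - trunc_laplace_nu a N w \<le> (\<integral>u. ?R u \<partial>nu N)"
    unfolding laplace_minus_trunc_eq
    by (intro integral_mono integrable_mult_right Bochner_Integration.integrable_add nu_exp_moment(1)
              Bochner_Integration.integrable_diff integrable_nu_exp integrable_nu_trunc_exp
          | simp only: left_diff_distrib mult_1)+
  also have "(\<integral>u. ?R u \<partial>nu N) = exp (- (real N * t * a))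
      * ((\<integral>u. exp (real N * (J * w + t) * u) \<partial>nu N) + (\<integral>u. exp (real N * (J * w - t) * u) \<partial>nu N))"
    using nu_exp_moment(1) by simp
  also have "\<dots> \<le> exp (- (real N * t * a))
      * (exp (real N * ((J * w + t)\<^sup>2 / (2 * J))) + exp (real N * ((J * w - t)\<^sup>2 / (2 * J))))"
    by (intro mult_left_mono add_mono nu_exp_moment_le) simp
  also have "\<dots> = exp (real N * ((J * w + t)\<^sup>2 / (2 * J) - t * a))
                  + exp (real N * ((J * w - t)\<^sup>2 / (2 * J) - t * a))"
    by (simp add: distrib_left exp_add[symmetric] right_diff_distrib mult_ac)
  also have "\<dots> \<le> exp (real N * (J * w\<^sup>2 / 2 - J * a\<^sup>2 / 8)) + exp (real N * (J * w\<^sup>2 / 2 - J * a\<^sup>2 / 8))"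
    using exponent[of 1] exponent[of "- 1"]
    by (intro add_mono exp_le_cancel_iff[THEN iffD2] mult_left_mono) auto
  finally show ?thesis by simp
qed

lemma laplace_minus_trunc_le_of_mgf_gap:
  assumes "mgf (J * w) \<le> exp (- d) * exp (J * w\<^sup>2 / 2)"
  shows "laplace_nu N w - trunc_laplace_nu a N w \<le> exp (real N * (J * w\<^sup>2 / 2 - d))"
proof -
  have "laplace_nu N w \<le> (exp (- d) * exp (J * w\<^sup>2 / 2)) ^ N"
    unfolding laplace_nu_eq by (intro power_mono assms) (simp add: mgf_pos less_imp_le)
  also have "\<dots> = exp (real N * (J * w\<^sup>2 / 2 - d))"
    by (simp add: exp_add[symmetric] exp_of_nat_mult[symmetric])
  finally show ?thesis using trunc_laplace_nu_nonneg[of a N w] by linarith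
qed

subsection \<open>The truncation error\<close>

lemma borel_measurable_nu_parametric:
  fixes f :: "real \<Rightarrow> real \<Rightarrow> real"
  assumes "(\<lambda>(w, u). f w u) \<in> borel_measurable (lborel \<Otimes>\<^sub>M borel)"
  shows "(\<lambda>w. \<integral>u. f w u \<partial>nu N) \<in> borel_measurable lborel"
proof -
  interpret prob_space "nu N" by (rule prob_space_nu)
  have "(\<lambda>(w, u). f w u) \<in> borel_measurable (lborel \<Otimes>\<^sub>M nu N)"
    by (subst measurable_cong_sets[OF sets_pair_measure_cong[OF refl sets_nu] refl]) (rule assms)
  thus ?thesis by (rule borel_measurable_lebesgue_integral)
qed

lemma borel_measurable_laplace_nu: "laplace_nu N \<in> borel_measurable lborel"
  unfolding laplace_nu_def[abs_def] by (rule borel_measurable_nu_parametric) measurable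

lemma borel_measurable_trunc_laplace_nu: "trunc_laplace_nu a N \<in> borel_measurable lborel"
  unfolding trunc_laplace_nu_def[abs_def] by (rule borel_measurable_nu_parametric) measurable

definition gauss_phase :: "real \<Rightarrow> real \<Rightarrow> nat \<Rightarrow> real \<Rightarrow> complex" where
  "gauss_phase r \<gamma> N w =
     exp (\<i> * complex_of_real (r * real N powr \<gamma> * w) - complex_of_real (real N * J / 2 * w\<^sup>2))"

lemma norm_gauss_phase: "norm (gauss_phase r \<gamma> N w) = exp (- (real N * J / 2 * w\<^sup>2))"
  by (simp add: gauss_phase_def)

lemma borel_measurable_gauss_phase: "gauss_phase r \<gamma> N \<in> borel_measurable lborel"
  unfolding gauss_phase_def[abs_def] by measurable

lemma integrable_gauss_phase_trunc:
  assumes "N > 0"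
  shows "integrable lborel (\<lambda>w. gauss_phase r \<gamma> N w * complex_of_real (trunc_laplace_nu a N w))"
proof (rule Bochner_Integration.integrable_bound)
  show "integrable lborel (\<lambda>w. exp (- (real N * J / 2) * w\<^sup>2 + (real N * J * a) * \<bar>w\<bar>))"
    using integrable_exp_neg_quadratic_abs[of "real N * J / 2" "real N * J * a"] J_pos assms by simp
  show "(\<lambda>w. gauss_phase r \<gamma> N w * complex_of_real (trunc_laplace_nu a N w)) \<in> borel_measurable lborel"
    using borel_measurable_gauss_phase borel_measurable_trunc_laplace_nu by measurable
  have "norm (gauss_phase r \<gamma> N w * complex_of_real (trunc_laplace_nu a N w))
          \<le> exp (- (real N * J / 2 * w\<^sup>2)) * exp (real N * J * a * \<bar>w\<bar>)" for w
    unfolding norm_mult norm_gauss_phase norm_of_real abs_of_nonneg[OF trunc_laplace_nu_nonneg]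
    by (intro mult_left_mono trunc_laplace_nu_le) simp
  thus "AE w in lborel. norm (gauss_phase r \<gamma> N w * complex_of_real (trunc_laplace_nu a N w))
          \<le> norm (exp (- (real N * J / 2) * w\<^sup>2 + (real N * J * a) * \<bar>w\<bar>))"
    by (intro AE_I2) (simp add: exp_add[symmetric])
qed

lemma integrable_gauss_phase_laplace_window:
  "integrable lborel (\<lambda>w. indicator {-B..B} w * (gauss_phase r \<gamma> N w * complex_of_real (laplace_nu N w)))"
proof (rule Bochner_Integration.integrable_bound)
  show "integrable lborel (indicator {-B..B} :: real \<Rightarrow> real)"
    by (simp add: integrable_indicator_iff emeasure_lborel_Icc_eq)
  show "(\<lambda>w. indicator {-B..B} w * (gauss_phase r \<gamma> N w * complex_of_real (laplace_nu N w)))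
          \<in> borel_measurable lborel"
    using borel_measurable_gauss_phase borel_measurable_laplace_nu by measurable
  have "norm (gauss_phase r \<gamma> N w * complex_of_real (laplace_nu N w)) \<le> 1" for w
  proof -
    have "norm (gauss_phase r \<gamma> N w * complex_of_real (laplace_nu N w))
            \<le> exp (- (real N * J / 2 * w\<^sup>2)) * exp (real N * (J * w\<^sup>2 / 2))"
      unfolding norm_mult norm_gauss_phase norm_of_real abs_of_nonneg[OF laplace_nu_nonneg]
      by (intro mult_left_mono laplace_nu_le) simp
    thus ?thesis by (simp add: exp_add[symmetric])
  qed
  thus "AE w in lborel. norm (indicator {-B..B} w * (gauss_phase r \<gamma> N w * complex_of_real (laplace_nu N w)))
          \<le> norm (indicator {-B..B} w :: real)"
    by (intro AE_I2) (auto simp: indicator_def)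
qed

lemma gauss_weighted_tail_le:
  assumes a: "0 < a" and w: "\<bar>w\<bar> \<le> B"
    and gap: "\<forall>w. a / 2 \<le> \<bar>w\<bar> \<and> \<bar>w\<bar> \<le> B \<longrightarrow> mgf (J * w) \<le> exp (- \<delta>) * exp (J * w\<^sup>2 / 2)"
  shows "exp (- (real N * J / 2 * w\<^sup>2)) * (laplace_nu N w - trunc_laplace_nu a N w)
           \<le> 2 * exp (- real N * min \<delta> (J * a\<^sup>2 / 8))"
proof (cases "\<bar>w\<bar> \<le> a / 2")
  case True
  have "exp (- (real N * J / 2 * w\<^sup>2)) * (laplace_nu N w - trunc_laplace_nu a N w)
          \<le> exp (- (real N * J / 2 * w\<^sup>2)) * (2 * exp (real N * (J * w\<^sup>2 / 2 - J * a\<^sup>2 / 8)))"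
    by (intro mult_left_mono laplace_minus_trunc_le_chernoff a True) simp
  also have "\<dots> = 2 * exp (- real N * (J * a\<^sup>2 / 8))"
    by (simp add: exp_add[symmetric] algebra_simps)
  also have "\<dots> \<le> 2 * exp (- real N * min \<delta> (J * a\<^sup>2 / 8))"
    using mult_left_mono[of "min \<delta> (J * a\<^sup>2 / 8)" "J * a\<^sup>2 / 8" "real N"] by simp
  finally show ?thesis .
next
  case False
  hence "mgf (J * w) \<le> exp (- \<delta>) * exp (J * w\<^sup>2 / 2)" using gap w by simp
  hence "exp (- (real N * J / 2 * w\<^sup>2)) * (laplace_nu N w - trunc_laplace_nu a N w)
           \<le> exp (- (real N * J / 2 * w\<^sup>2)) * exp (real N * (J * w\<^sup>2 / 2 - \<delta>))"
    by (intro mult_left_mono laplace_minus_trunc_le_of_mgf_gap) simp_all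
  also have "\<dots> = exp (- real N * \<delta>)" by (simp add: exp_add[symmetric] algebra_simps)
  also have "\<dots> \<le> exp (- real N * min \<delta> (J * a\<^sup>2 / 8))"
    using mult_left_mono[of "min \<delta> (J * a\<^sup>2 / 8)" \<delta> "real N"] by simp
  also have "\<dots> \<le> 2 * exp (- real N * min \<delta> (J * a\<^sup>2 / 8))" by simp
  finally show ?thesis .
qed

lemma gauss_weighted_trunc_le:
  assumes N: "N > 0" and a: "0 < a" "a \<le> B" and w: "B < \<bar>w\<bar>"
  shows "exp (- (real N * J / 2 * w\<^sup>2)) * trunc_laplace_nu a N w
           \<le> exp (- (real N - 1) * (J * (B\<^sup>2 / 2 - a * B))) * exp (- (J / 2) * w\<^sup>2 + J * a * \<bar>w\<bar>)"
proof -
  have "B\<^sup>2 / 2 - a * B \<le> w\<^sup>2 / 2 - a * \<bar>w\<bar>"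
  proof -
    have "w\<^sup>2 / 2 - a * \<bar>w\<bar> - (B\<^sup>2 / 2 - a * B) = (\<bar>w\<bar> - B) * ((\<bar>w\<bar> + B) / 2 - a)"
      by (simp add: power2_eq_square field_simps)
    also have "\<dots> \<ge> 0" using a w by (intro mult_nonneg_nonneg) auto
    finally show ?thesis by simp
  qed
  hence "(real N - 1) * J * (B\<^sup>2 / 2 - a * B) \<le> (real N - 1) * J * (w\<^sup>2 / 2 - a * \<bar>w\<bar>)"
    using N J_pos by (intro mult_left_mono) auto
  moreover have "- (real N * J / 2 * w\<^sup>2) + real N * J * a * \<bar>w\<bar>
      = - ((real N - 1) * J * (w\<^sup>2 / 2 - a * \<bar>w\<bar>)) + (- (J / 2) * w\<^sup>2 + J * a * \<bar>w\<bar>)"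
    by (simp add: field_simps)
  moreover have "- (real N - 1) * (J * (B\<^sup>2 / 2 - a * B)) = - ((real N - 1) * J * (B\<^sup>2 / 2 - a * B))"
    by (simp only: minus_mult_left mult.assoc)
  ultimately have "- (real N * J / 2 * w\<^sup>2) + real N * J * a * \<bar>w\<bar>
           \<le> - (real N - 1) * (J * (B\<^sup>2 / 2 - a * B)) + (- (J / 2) * w\<^sup>2 + J * a * \<bar>w\<bar>)"
    by linarith
  hence "exp (- (real N * J / 2 * w\<^sup>2)) * exp (real N * J * a * \<bar>w\<bar>)
           \<le> exp (- (real N - 1) * (J * (B\<^sup>2 / 2 - a * B))) * exp (- (J / 2) * w\<^sup>2 + J * a * \<bar>w\<bar>)"
    by (simp only: exp_add[symmetric] exp_le_cancel_iff)
  moreover have "exp (- (real N * J / 2 * w\<^sup>2)) * trunc_laplace_nu a N w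
                   \<le> exp (- (real N * J / 2 * w\<^sup>2)) * exp (real N * J * a * \<bar>w\<bar>)"
    by (intro mult_left_mono trunc_laplace_nu_le) simp
  ultimately show ?thesis by linarith
qed

definition truncation_error :: "real \<Rightarrow> real \<Rightarrow> real \<Rightarrow> real \<Rightarrow> nat \<Rightarrow> complex" where
  "truncation_error a B r \<gamma> N =
     (\<integral>w. gauss_phase r \<gamma> N w * complex_of_real (trunc_laplace_nu a N w) \<partial>lborel)
     - (\<integral>w. indicator {-B..B} w * (gauss_phase r \<gamma> N w * complex_of_real (laplace_nu N w)) \<partial>lborel)"

lemma truncation_error_le:
  assumes N: "N > 0" and a: "0 < a" "a \<le> B"
    and gap: "\<forall>w. a / 2 \<le> \<bar>w\<bar> \<and> \<bar>w\<bar> \<le> B \<longrightarrow> mgf (J * w) \<le> exp (- \<delta>) * exp (J * w\<^sup>2 / 2)"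
  shows "cmod (truncation_error a B r \<gamma> N)
     \<le> exp (- (real N - 1) * (J * (B\<^sup>2 / 2 - a * B))) * (\<integral>w. exp (- (J / 2) * w\<^sup>2 + J * a * \<bar>w\<bar>) \<partial>lborel)
       + 4 * B * exp (- real N * min \<delta> (J * a\<^sup>2 / 8))"
proof -
  define F1 where "F1 w = gauss_phase r \<gamma> N w * complex_of_real (trunc_laplace_nu a N w)" for w
  define F2 where "F2 w = indicator {-B..B} w * (gauss_phase r \<gamma> N w * complex_of_real (laplace_nu N w))" for w
  define E where "E = exp (- (real N - 1) * (J * (B\<^sup>2 / 2 - a * B)))"
  define k where "k w = exp (- (J / 2) * w\<^sup>2 + J * a * \<bar>w\<bar>)" for w
  define \<eta> where "\<eta> = 2 * exp (- real N * min \<delta> (J * a\<^sup>2 / 8))"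
  have k: "integrable lborel k"
    unfolding k_def using integrable_exp_neg_quadratic_abs[of "J / 2" "J * a"] J_pos by simp
  have window: "integrable lborel (indicator {-B..B} :: real \<Rightarrow> real)"
    by (simp add: integrable_indicator_iff emeasure_lborel_Icc_eq)
  have F1: "integrable lborel F1"
    unfolding F1_def[abs_def] by (rule integrable_gauss_phase_trunc[OF N])
  have F2: "integrable lborel F2"
    unfolding F2_def[abs_def] by (rule integrable_gauss_phase_laplace_window)
  have bound: "norm (F1 w - F2 w) \<le> E * k w + \<eta> * indicator {-B..B} w" for w
  proof (cases "w \<in> {-B..B}")
    case True
    hence "norm (F1 w - F2 w)
             = norm (gauss_phase r \<gamma> N w * complex_of_real (trunc_laplace_nu a N w - laplace_nu N w))"
      by (simp add: F1_def F2_def right_diff_distrib)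
    also have "\<dots> = exp (- (real N * J / 2 * w\<^sup>2)) * (laplace_nu N w - trunc_laplace_nu a N w)"
      unfolding norm_mult norm_gauss_phase norm_of_real using trunc_laplace_nu_le_laplace[of a N w] by simp
    also have "\<dots> \<le> \<eta>" unfolding \<eta>_def by (rule gauss_weighted_tail_le[OF a(1) _ gap]) (use True in auto)
    moreover have "0 \<le> E * k w" by (simp add: E_def k_def)
    ultimately show ?thesis using True by simp
  next
    case False
    hence "norm (F1 w - F2 w) = exp (- (real N * J / 2 * w\<^sup>2)) * trunc_laplace_nu a N w"
      using trunc_laplace_nu_nonneg[of a N w] by (simp add: F1_def F2_def norm_mult norm_gauss_phase)
    also have "\<dots> \<le> E * k w"
      unfolding E_def k_def using False by (intro gauss_weighted_trunc_le N a) auto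
    finally show ?thesis using False by simp
  qed
  have "norm (\<integral>w. F1 w - F2 w \<partial>lborel) \<le> (\<integral>w. E * k w + \<eta> * indicator {-B..B} w \<partial>lborel)"
    by (rule Bochner_Integration.integral_norm_bound_integral[OF Bochner_Integration.integrable_diff[OF F1 F2] _ bound])
       (intro Bochner_Integration.integrable_add integrable_mult_right k window)
  also have "(\<integral>w. E * k w + \<eta> * indicator {-B..B} w \<partial>lborel) = E * (\<integral>w. k w \<partial>lborel) + 2 * B * \<eta>"
    using k window a by simp
  finally have "norm (\<integral>w. F1 w - F2 w \<partial>lborel) \<le> E * (\<integral>w. k w \<partial>lborel) + 2 * B * \<eta>" .
  moreover have "truncation_error a B r \<gamma> N = (\<integral>w. F1 w - F2 w \<partial>lborel)"
    unfolding truncation_error_def Bochner_Integration.integral_diff[OF F1 F2]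
    by (simp add: F1_def[abs_def] F2_def[abs_def])
  ultimately show ?thesis by (simp add: E_def k_def \<eta>_def)
qed

lemma truncation_error_exponentially_small_in_window:
  assumes a: "0 < a" "a < B / 2"
    and gap: "\<exists>\<delta>>0. \<forall>w. a / 2 \<le> \<bar>w\<bar> \<and> \<bar>w\<bar> \<le> B \<longrightarrow> mgf (J * w) \<le> exp (- \<delta>) * exp (J * w\<^sup>2 / 2)"
  shows "\<exists>\<delta>>0. \<forall>r \<gamma>. \<exists>C. \<forall>\<^sub>F N in sequentially. cmod (truncation_error a B r \<gamma> N) \<le> C * exp (- real N * \<delta>)"
proof -
  obtain \<delta> where "\<delta> > 0" and gap\<delta>:
    "\<forall>w. a / 2 \<le> \<bar>w\<bar> \<and> \<bar>w\<bar> \<le> B \<longrightarrow> mgf (J * w) \<le> exp (- \<delta>) * exp (J * w\<^sup>2 / 2)"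
    using gap by blast
  define d where "d = J * (B\<^sup>2 / 2 - a * B)"
  define K where "K = (\<integral>w. exp (- (J / 2) * w\<^sup>2 + J * a * \<bar>w\<bar>) \<partial>lborel)"
  have "d > 0"
  proof -
    have "B\<^sup>2 / 2 - a * B = B * (B / 2 - a)" by (simp add: power2_eq_square algebra_simps)
    thus ?thesis unfolding d_def using a J_pos by simp
  qed
  have "0 \<le> K" unfolding K_def by (rule integral_nonneg_AE) simp
  show ?thesis
  proof (rule exI[of _ "min d (min \<delta> (J * a\<^sup>2 / 8))"], intro conjI allI)
    show "0 < min d (min \<delta> (J * a\<^sup>2 / 8))" using \<open>d > 0\<close> \<open>\<delta> > 0\<close> a J_pos by simp
    fix r \<gamma> :: real
    show "\<exists>C. \<forall>\<^sub>F N in sequentially.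
            cmod (truncation_error a B r \<gamma> N) \<le> C * exp (- real N * min d (min \<delta> (J * a\<^sup>2 / 8)))"
    proof (intro exI[of _ "K * exp d + 4 * B"] eventually_sequentiallyI[of 1])
      fix N :: nat assume "1 \<le> N"
      hence "cmod (truncation_error a B r \<gamma> N)
               \<le> exp (- (real N - 1) * d) * K + 4 * B * exp (- real N * min \<delta> (J * a\<^sup>2 / 8))"
        using truncation_error_le[of N a B \<delta>] a gap\<delta> unfolding d_def K_def by simp
      also have "\<dots> \<le> (K * exp d + 4 * B) * exp (- real N * min d (min \<delta> (J * a\<^sup>2 / 8)))"
        using \<open>0 \<le> K\<close> a by (intro exp_two_rates_le_min_rate) auto
      finally show "cmod (truncation_error a B r \<gamma> N)
                      \<le> (K * exp d + 4 * B) * exp (- real N * min d (min \<delta> (J * a\<^sup>2 / 8)))" .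
    qed
  qed
qed

lemma truncation_error_exponentially_small:
  "\<exists>Bhat>0. \<forall>B. 0 < B \<and> B < Bhat \<longrightarrow> (\<forall>a. 0 < a \<and> a < B / 2 \<longrightarrow>
     (\<exists>\<delta>>0. \<forall>r \<gamma>. \<exists>C. \<forall>\<^sub>F N in sequentially.
        cmod (truncation_error a B r \<gamma> N) \<le> C * exp (- real N * \<delta>)))"
proof -
  obtain \<epsilon> where \<epsilon>: "\<epsilon> > 0" "\<forall>c b. 0 < c \<and> c \<le> b \<and> b < \<epsilon> \<longrightarrow>
      (\<exists>\<delta>>0. \<forall>s. c \<le> \<bar>s\<bar> \<and> \<bar>s\<bar> \<le> b \<longrightarrow> mgf s \<le> exp (- \<delta>) * exp (s\<^sup>2 / (2 * J)))"
    using mgf_uniform_gap by blast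
  have "\<exists>\<delta>>0. \<forall>w. a / 2 \<le> \<bar>w\<bar> \<and> \<bar>w\<bar> \<le> B \<longrightarrow> mgf (J * w) \<le> exp (- \<delta>) * exp (J * w\<^sup>2 / 2)"
    if "0 < a" "a < B / 2" "B < \<epsilon> / J" for a B
  proof -
    have "0 < J * (a / 2)" "J * (a / 2) \<le> J * B" "J * B < \<epsilon>"
      using that J_pos by (simp_all add: field_simps)
    then obtain \<delta> where "\<delta> > 0" and \<delta>:
      "\<forall>s. J * (a / 2) \<le> \<bar>s\<bar> \<and> \<bar>s\<bar> \<le> J * B \<longrightarrow> mgf s \<le> exp (- \<delta>) * exp (s\<^sup>2 / (2 * J))"
      using \<epsilon>(2) by blast
    have "mgf (J * w) \<le> exp (- \<delta>) * exp (J * w\<^sup>2 / 2)" if "a / 2 \<le> \<bar>w\<bar> \<and> \<bar>w\<bar> \<le> B" for w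
    proof -
      have "J * (a / 2) \<le> \<bar>J * w\<bar> \<and> \<bar>J * w\<bar> \<le> J * B" using that J_pos by (simp add: abs_mult)
      moreover have "(J * w)\<^sup>2 / (2 * J) = J * w\<^sup>2 / 2" using J_pos by (simp add: power2_eq_square)
      ultimately show ?thesis using \<delta> by metis
    qed
    thus ?thesis using \<open>\<delta> > 0\<close> by blast
  qed
  note window_gap = this
  show ?thesis
  proof (rule exI[of _ "\<epsilon> / J"], intro conjI allI impI)
    show "0 < \<epsilon> / J" using \<epsilon>(1) J_pos by simp
    fix B a :: real assume "0 < B \<and> B < \<epsilon> / J" "0 < a \<and> a < B / 2"
    thus "\<exists>\<delta>>0. \<forall>r \<gamma>. \<exists>C. \<forall>\<^sub>F N in sequentially.
            cmod (truncation_error a B r \<gamma> N) \<le> C * exp (- real N * \<delta>)"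
      using window_gap by (intro truncation_error_exponentially_small_in_window) auto
  qed
qed

end

theorem mainTheorem8:
  fixes \<rho> :: "real measure" and J h \<mu> :: real
  assumes rho_sets: "sets \<rho> = sets borel"
    and rho_prob: "prob_space \<rho>"
    and rho_nondeg: "\<forall>c. measure \<rho> {c} \<noteq> 1"
    and rho_mom: "\<forall>a>0. \<forall>b. integrable \<rho> (\<lambda>x. exp (a * x\<^sup>2 / 2 + b * x))"
    and J_pos: "J > 0"
    and mu_max: "\<forall>x. fCW \<rho> J h x \<le> fCW \<rho> J h \<mu>"
  shows "\<exists>Bhat>0. \<forall>B. 0 < B \<and> B < Bhat \<longrightarrow> (\<forall>a. 0 < a \<and> a < B / 2 \<longrightarrow>
           (\<exists>\<delta>>0. \<forall>r \<gamma> :: real. \<exists>C. \<forall>\<^sub>F N in sequentially.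
              cmod ((\<integral>w. exp (\<i> * complex_of_real (r * real N powr \<gamma> * w)
                               - complex_of_real (real N * J / 2 * w\<^sup>2))
                          * complex_of_real (\<integral>u. indicator {-a..a} u * exp (real N * J * u * w)
                                                 \<partial>(nuU \<rho> J h \<mu> N)) \<partial>lborel)
                  - (\<integral>w. indicator {-B..B} w *
                           (exp (\<i> * complex_of_real (r * real N powr \<gamma> * w)
                               - complex_of_real (real N * J / 2 * w\<^sup>2))
                          * complex_of_real (\<integral>u. exp (real N * J * u * w) \<partial>(nuU \<rho> J h \<mu> N))) \<partial>lborel))
              \<le> C * exp (- real N * \<delta>)))"
proof -
  interpret curie_weiss_maximum \<rho> J h \<mu>
    using rho_sets rho_prob rho_mom J_pos mu_max by (rule curie_weiss_maximum.intro)
  show ?thesis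
    using truncation_error_exponentially_small
    unfolding truncation_error_def gauss_phase_def trunc_laplace_nu_def laplace_nu_def .
qed

end
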